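(* Let $G$ be a graph and $v$ a vertex of $G$. Then $v$ is always-activated if and only if $v$ is $\mathbf{c}_v$-always-activated, i.e. if and only if $v$ is fixed, $\mathbf{c}_v$ is solvable, and $\mathbf{p}(v)=1$ for every pattern $\mathbf{p}$ with $N(G)\mathbf{p}=\mathbf{c}_v$.
   Context: For a finite simple graph $G$ with vertex set $\{v_1,\dots,v_n\}$, the closed adjacency matrix $N(G)$ is the $n\times n$ matrix over $\mathbb{Z}_2$ whose $(i,j)$ entry is $1$ iff $i=j$ or $v_i$ is adjacent to $v_j$. Vectors in $\mathbb{Z}_2^{V(G)}$ are patterns/configurations; $\mathbf{p}$ solves $\mathbf{c}$ if $N(G)\mathbf{p}=\mathbf{c}$, and $\mathbf{c}$ is solvable if it has a solving pattern. Null patterns are elements of $\operatorname{Ker}(N(G))$. $\mathbf{1}$ is the all-ones configuration (always solvable); $\mathbf{c}_v$ is the configuration with $\mathbf{c}_v(x)=1$ iff $x=v$. A vertex $v$ is half-activated if $\boldsymbol{\ell}(v)=1$ for some null pattern $\boldsymbol{\ell}$, and fixed otherwise. A fixed vertex $v$ is always-activated if $\mathbf{p}(v)=1$ for every $\mathbf{p}$ with $N(G)\mathbf{p}=\mathbf{1}$. For a solvable configuration $\mathbf{c}$, a fixed vertex $v$ is $\mathbf{c}$-always-activated if $\mathbf{p}(v)=1$ for every $\mathbf{p}$ with $N(G)\mathbf{p}=\mathbf{c}$. *)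

theory Defs
  imports Main "HOL-Library.Z2"
begin

text \<open>Patterns/configurations are maps V -> Z_2
(type bit), represented as functions that vanish outside V.\<close>

definition simple_graph :: "'a set \<Rightarrow> ('a \<Rightarrow> 'a \<Rightarrow> bool) \<Rightarrow> bool" where
  "simple_graph V E \<longleftrightarrow> finite V \<and> (\<forall>x y. E x y \<longrightarrow> x \<in> V \<and> y \<in> V)
     \<and> (\<forall>x y. E x y \<longrightarrow> E y x) \<and> (\<forall>x. \<not> E x x)"

definition vec :: "'a set \<Rightarrow> ('a \<Rightarrow> bit) set" where
  "vec V = {p. \<forall>x. x \<notin> V \<longrightarrow> p x = 0}"

definition closedN :: "'a set \<Rightarrow> ('a \<Rightarrow> 'a \<Rightarrow> bool) \<Rightarrow> ('a \<Rightarrow> bit) \<Rightarrow> ('a \<Rightarrow> bit)" where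
  "closedN V E p = (\<lambda>x. if x \<in> V then (\<Sum>y\<in>{y\<in>V. x = y \<or> E x y}. p y) else 0)"

definition solves :: "'a set \<Rightarrow> ('a \<Rightarrow> 'a \<Rightarrow> bool) \<Rightarrow> ('a \<Rightarrow> bit) \<Rightarrow> ('a \<Rightarrow> bit) \<Rightarrow> bool" where
  "solves V E p c \<longleftrightarrow> p \<in> vec V \<and> closedN V E p = c"

definition solvable :: "'a set \<Rightarrow> ('a \<Rightarrow> 'a \<Rightarrow> bool) \<Rightarrow> ('a \<Rightarrow> bit) \<Rightarrow> bool" where
  "solvable V E c \<longleftrightarrow> (\<exists>p. solves V E p c)"

definition null_pattern :: "'a set \<Rightarrow> ('a \<Rightarrow> 'a \<Rightarrow> bool) \<Rightarrow> ('a \<Rightarrow> bit) \<Rightarrow> bool" where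
  "null_pattern V E l \<longleftrightarrow> solves V E l (\<lambda>_. 0)"

definition ones :: "'a set \<Rightarrow> 'a \<Rightarrow> bit" where
  "ones V = (\<lambda>x. if x \<in> V then 1 else 0)"

definition cvec :: "'a \<Rightarrow> 'a \<Rightarrow> bit" where
  "cvec v = (\<lambda>x. if x = v then 1 else 0)"

definition half_activated :: "'a set \<Rightarrow> ('a \<Rightarrow> 'a \<Rightarrow> bool) \<Rightarrow> 'a \<Rightarrow> bool" where
  "half_activated V E v \<longleftrightarrow> (\<exists>l. null_pattern V E l \<and> l v = 1)"

definition fixed_vertex :: "'a set \<Rightarrow> ('a \<Rightarrow> 'a \<Rightarrow> bool) \<Rightarrow> 'a \<Rightarrow> bool" where
  "fixed_vertex V E v \<longleftrightarrow> v \<in> V \<and> \<not> half_activated V E v"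

definition always_activated :: "'a set \<Rightarrow> ('a \<Rightarrow> 'a \<Rightarrow> bool) \<Rightarrow> 'a \<Rightarrow> bool" where
  "always_activated V E v \<longleftrightarrow> fixed_vertex V E v \<and>
     (\<forall>p. solves V E p (ones V) \<longrightarrow> p v = 1)"

definition c_always_activated ::
  "'a set \<Rightarrow> ('a \<Rightarrow> 'a \<Rightarrow> bool) \<Rightarrow> ('a \<Rightarrow> bit) \<Rightarrow> 'a \<Rightarrow> bool" where
  "c_always_activated V E c v \<longleftrightarrow> solvable V E c \<and> fixed_vertex V E v \<and>
     (\<forall>p. solves V E p c \<longrightarrow> p v = 1)"

end

theory Submission
  imports Defs
begin

text \<open>Over \<open>\<int>\<^sub>2\<close> let \<open>\<langle>a, b\<rangle> = \<Sum>\<^sub>x a(x) b(x)\<close>. The matrix \<open>N\<close> is symmetric,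
  so \<open>\<langle>N p, q\<rangle> = \<langle>p, N q\<rangle>\<close>, and \<open>\<langle>N q, q\<rangle> = \<langle>q, \<one>\<rangle>\<close> because the off-diagonal terms
  \<open>q(x) q(y)\<close> of an edge occur twice. Hence if \<open>N p = \<one>\<close> and \<open>N q = c\<^sub>v\<close>, then
  \<open>p(v) = \<langle>N q, p\<rangle> = \<langle>q, \<one>\<rangle> = \<langle>N q, q\<rangle> = q(v)\<close>: the two kinds of solutions always
  agree at \<open>v\<close>. It remains to see that \<open>c\<^sub>v\<close> is solvable when \<open>v\<close> is fixed; by symmetry
  of \<open>N\<close> its image is the orthogonal complement of its kernel, and \<open>\<langle>l, c\<^sub>v\<rangle> = l(v) = 0\<close>
  for every null pattern \<open>l\<close>; likewise \<open>\<langle>l, \<one>\<rangle> = \<langle>N l, l\<rangle> = 0\<close> shows that \<open>\<one>\<close> is solvable.\<close>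

lemma bit_add_self [simp]: "(x::bit) + x = 0"
  by simp

text \<open>The library rewrites \<open>+\<close> and \<open>*\<close> on \<open>bit\<close> into \<open>xor\<close> and \<open>and\<close>, which destroys the
  ring structure that the sum manipulations below rely on.\<close>

declare add_bit_eq_xor [simp del] mult_bit_eq_and [simp del]

lemma if_zero_mult: "(if P then a else 0) * b = (if P then a * b else (0::'a::mult_zero))"
  by simp

lemma mult_if_zero: "b * (if P then a else 0) = (if P then b * a else (0::'a::mult_zero))"
  by simp

definition dot_on :: "'a set \<Rightarrow> ('a \<Rightarrow> bit) \<Rightarrow> ('a \<Rightarrow> bit) \<Rightarrow> bit" where
  "dot_on V a b = (\<Sum>x\<in>V. a x * b x)"

lemma dot_on_add_left: "dot_on V (\<lambda>x. a x + b x) c = dot_on V a c + dot_on V b c"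
  unfolding dot_on_def by (simp only: distrib_right sum.distrib)

lemma dot_on_add_right: "dot_on V a (\<lambda>x. b x + c x) = dot_on V a b + dot_on V a c"
  unfolding dot_on_def by (simp only: distrib_left sum.distrib)

lemma dot_on_cvec_left: "finite V \<Longrightarrow> v \<in> V \<Longrightarrow> dot_on V (cvec v) a = a v"
  unfolding dot_on_def cvec_def by (simp add: of_bool_def[symmetric])

lemma dot_on_cvec_right: "finite V \<Longrightarrow> v \<in> V \<Longrightarrow> dot_on V a (cvec v) = a v"
  unfolding dot_on_def cvec_def by (simp add: of_bool_def[symmetric])

lemma dot_on_ones_right: "dot_on V a (ones V) = (\<Sum>x\<in>V. a x)"
  unfolding dot_on_def ones_def by (intro sum.cong refl) simp

text \<open>Over \<open>\<int>\<^sub>2\<close> the subset sums of the \<open>f i\<close> are exactly their linear span.\<close>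

definition subset_sums :: "('i \<Rightarrow> 'a \<Rightarrow> bit) \<Rightarrow> 'i set \<Rightarrow> ('a \<Rightarrow> bit) set" where
  "subset_sums f I = {(\<lambda>x. \<Sum>i\<in>T. f i x) | T. T \<subseteq> I}"

lemma subset_sums_mono: "I \<subseteq> J \<Longrightarrow> subset_sums f I \<subseteq> subset_sums f J"
  unfolding subset_sums_def by blast

lemma subset_sums_add_insert:
  assumes "finite I" "s \<notin> I" "c \<in> subset_sums f I"
  shows "(\<lambda>x. c x + f s x) \<in> subset_sums f (insert s I)"
proof -
  obtain T where T: "T \<subseteq> I" "c = (\<lambda>x. \<Sum>i\<in>T. f i x)"
    using assms(3) unfolding subset_sums_def by blast
  have "finite T" "s \<notin> T"
    using T(1) assms(1,2) finite_subset by auto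
  then have "(\<lambda>x. c x + f s x) = (\<lambda>x. \<Sum>i\<in>insert s T. f i x)"
    using T(2) by (simp add: add.commute)
  moreover have "insert s T \<subseteq> insert s I"
    using T(1) by blast
  ultimately show ?thesis
    unfolding subset_sums_def by blast
qed

lemma separating_functional:
  assumes "finite V" "finite I" "\<forall>i\<in>I. f i \<in> vec V" "c \<in> vec V" "c \<notin> subset_sums f I"
  shows "\<exists>w\<in>vec V. (\<forall>i\<in>I. dot_on V w (f i) = 0) \<and> dot_on V w c = 1"
  using assms(2-5)
proof (induction I arbitrary: c rule: finite_induct)
  case empty
  then have "c \<noteq> (\<lambda>x. 0)"
    unfolding subset_sums_def by auto
  then obtain y where "c y = 1"
    by (metis bit_not_zero_iff)
  moreover have "y \<in> V"
    using \<open>c y = 1\<close> \<open>c \<in> vec V\<close> unfolding vec_def by auto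
  ultimately have "cvec y \<in> vec V" "dot_on V (cvec y) c = 1"
    using dot_on_cvec_left[OF assms(1)] unfolding vec_def cvec_def by auto
  then show ?case
    by blast
next
  case (insert s I)
  let ?c' = "\<lambda>x. c x + f s x"
  have "c \<notin> subset_sums f I"
    using insert.prems(3) subset_sums_mono[of I "insert s I" f] by blast
  then obtain w where w: "w \<in> vec V" "\<forall>i\<in>I. dot_on V w (f i) = 0" "dot_on V w c = 1"
    using insert.IH insert.prems by blast
  have "?c' \<notin> subset_sums f I"
  proof
    assume "?c' \<in> subset_sums f I"
    then have "(\<lambda>x. ?c' x + f s x) \<in> subset_sums f (insert s I)"
      using subset_sums_add_insert[OF insert.hyps] by blast
    then show False
      using insert.prems(3) by (simp add: add.assoc)
  qed
  moreover have "?c' \<in> vec V"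
    using insert.prems unfolding vec_def by auto
  ultimately obtain w' where w': "w' \<in> vec V" "\<forall>i\<in>I. dot_on V w' (f i) = 0"
      "dot_on V w' ?c' = 1"
    using insert.IH insert.prems(1) by blast
  then have w'_split: "dot_on V w' c + dot_on V w' (f s) = 1"
    by (simp only: dot_on_add_right)
  consider "dot_on V w (f s) = 0" | "dot_on V w' (f s) = 0"
    | "dot_on V w (f s) = 1" "dot_on V w' (f s) = 1"
    using bit_not_zero_iff by blast
  then show ?case
  proof cases
    case 1
    then show ?thesis using w by auto
  next
    case 2
    then show ?thesis using w'(1,2) w'_split by auto
  next
    case 3
    have "(\<lambda>x. w x + w' x) \<in> vec V"
      using w(1) w'(1) unfolding vec_def by auto
    moreover have "\<forall>i\<in>insert s I. dot_on V (\<lambda>x. w x + w' x) (f i) = 0"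
      using w(2) w'(2) 3 by (simp add: dot_on_add_left)
    moreover have "dot_on V (\<lambda>x. w x + w' x) c = 1"
      using w(3) w'_split 3 by (simp add: dot_on_add_left)
    ultimately show ?thesis
      by blast
  qed
qed

lemma closedN_eq_sum:
  "finite V \<Longrightarrow> x \<in> V \<Longrightarrow> closedN V E p x = (\<Sum>y\<in>V. if x = y \<or> E x y then p y else 0)"
  unfolding closedN_def by (simp add: sum.inter_filter)

lemma closedN_in_vec: "closedN V E p \<in> vec V"
  unfolding closedN_def vec_def by simp

lemma dot_on_closedN_symmetric:
  assumes "simple_graph V E"
  shows "dot_on V (closedN V E p) q = dot_on V p (closedN V E q)"
proof -
  have fin: "finite V" and sym: "\<And>x y. E x y = E y x"
    using assms unfolding simple_graph_def by blast+
  have "dot_on V (closedN V E p) q = (\<Sum>x\<in>V. \<Sum>y\<in>V. if x = y \<or> E x y then p y * q x else 0)"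
    unfolding dot_on_def
    by (intro sum.cong refl) (simp add: closedN_eq_sum[OF fin] sum_distrib_right if_zero_mult)
  also have "\<dots> = (\<Sum>y\<in>V. \<Sum>x\<in>V. if x = y \<or> E x y then p y * q x else 0)"
    by (rule sum.swap)
  also have "\<dots> = dot_on V p (closedN V E q)"
    unfolding dot_on_def
    by (intro sum.cong refl)
      (simp add: closedN_eq_sum[OF fin] sum_distrib_left mult_if_zero sym eq_commute)
  finally show ?thesis .
qed

text \<open>Each edge contributes the summand \<open>q x * q y\<close> twice, and \<open>1 + 1 = 0\<close>.\<close>

lemma sum_adjacent_products_eq_0:
  assumes "symp E" "irreflp E" "finite F"
  shows "(\<Sum>x\<in>F. \<Sum>y\<in>F. if E x y then q x * q y else (0::bit)) = 0"
  using assms(3)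
proof (induction F rule: finite_induct)
  case empty
  then show ?case by simp
next
  case (insert a F)
  let ?g = "\<lambda>x y. if E x y then q x * q y else (0::bit)"
  have "(\<Sum>x\<in>insert a F. \<Sum>y\<in>insert a F. ?g x y)
      = ?g a a + (\<Sum>y\<in>F. ?g a y) + (\<Sum>x\<in>F. ?g x a) + (\<Sum>x\<in>F. \<Sum>y\<in>F. ?g x y)"
    by (simp only: sum.insert[OF insert.hyps] sum.distrib add.assoc add.left_commute)
  also have "(\<Sum>x\<in>F. ?g x a) = (\<Sum>y\<in>F. ?g a y)"
    using assms(1) by (intro sum.cong refl) (simp add: symp_def mult.commute)
  finally show ?case
    using insert.IH assms(2) by (simp add: irreflp_def)
qed

lemma dot_on_closedN_self:
  assumes "simple_graph V E"
  shows "dot_on V (closedN V E q) q = (\<Sum>x\<in>V. q x)"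
proof -
  have fin: "finite V" and "symp E" "irreflp E"
    using assms unfolding simple_graph_def symp_def irreflp_def by blast+
  have "dot_on V (closedN V E q) q
      = (\<Sum>x\<in>V. \<Sum>y\<in>V. (if x = y then q x else 0) + (if E x y then q x * q y else 0))"
    unfolding dot_on_def
  proof (intro sum.cong refl)
    fix x
    assume "x \<in> V"
    show "closedN V E q x * q x
        = (\<Sum>y\<in>V. (if x = y then q x else 0) + (if E x y then q x * q y else 0))"
      unfolding closedN_eq_sum[OF fin \<open>x \<in> V\<close>] sum_distrib_right
      using \<open>irreflp E\<close> by (intro sum.cong refl) (auto simp: irreflp_def mult.commute)
  qed
  also have "\<dots> = (\<Sum>x\<in>V. q x)"
    using fin sum_adjacent_products_eq_0[OF \<open>symp E\<close> \<open>irreflp E\<close> fin, of q]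
    by (simp add: sum.distrib)
  finally show ?thesis .
qed

lemma closedN_cvec:
  assumes "finite V" "x \<in> V" "y \<in> V"
  shows "closedN V E (cvec y) x = (if x = y \<or> E x y then 1 else 0)"
proof -
  have "closedN V E (cvec y) x = (\<Sum>z\<in>V. if z = y then (if x = z \<or> E x z then 1 else 0) else 0)"
    unfolding closedN_eq_sum[OF assms(1,2)] cvec_def by (intro sum.cong refl) auto
  then show ?thesis
    using assms(1,3) by (simp add: sum.delta)
qed

lemma closedN_indicator:
  assumes "finite V" "T \<subseteq> V"
  shows "closedN V E (\<lambda>z. if z \<in> T then 1 else 0) = (\<lambda>x. \<Sum>y\<in>T. closedN V E (cvec y) x)"
proof
  fix x
  show "closedN V E (\<lambda>z. if z \<in> T then 1 else 0) x = (\<Sum>y\<in>T. closedN V E (cvec y) x)"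
  proof (cases "x \<in> V")
    case True
    have "closedN V E (\<lambda>z. if z \<in> T then 1 else 0) x
        = (\<Sum>y\<in>V. if y \<in> T then (if x = y \<or> E x y then 1 else 0) else (0::bit))"
      using assms(1) True by (simp add: closedN_eq_sum) (intro sum.cong, auto)
    also have "\<dots> = (\<Sum>y\<in>T. if x = y \<or> E x y then 1 else 0)"
      using assms by (simp add: sum.inter_restrict[symmetric] Int_absorb1)
    also have "\<dots> = (\<Sum>y\<in>T. closedN V E (cvec y) x)"
      using assms True by (intro sum.cong refl) (auto simp: closedN_cvec)
    finally show ?thesis .
  qed (simp add: closedN_def)
qed

lemma solvable_if_orthogonal_to_null_patterns:
  assumes G: "simple_graph V E" and "c \<in> vec V"
    and orth: "\<And>l. null_pattern V E l \<Longrightarrow> dot_on V l c = 0"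
  shows "solvable V E c"
proof (rule ccontr)
  assume unsolvable: "\<not> solvable V E c"
  have fin: "finite V"
    using G unfolding simple_graph_def by blast
  have "c \<notin> subset_sums (\<lambda>y. closedN V E (cvec y)) V"
  proof
    assume "c \<in> subset_sums (\<lambda>y. closedN V E (cvec y)) V"
    then obtain T where T: "T \<subseteq> V" "c = (\<lambda>x. \<Sum>y\<in>T. closedN V E (cvec y) x)"
      unfolding subset_sums_def by blast
    then have "c = closedN V E (\<lambda>z. if z \<in> T then 1 else 0)"
      using closedN_indicator[OF fin T(1)] by simp
    moreover have "(\<lambda>z. if z \<in> T then 1 else 0) \<in> vec V"
      using T(1) unfolding vec_def by auto
    ultimately have "solves V E (\<lambda>z. if z \<in> T then 1 else 0) c"
      unfolding solves_def by simp
    then show False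
      using unsolvable unfolding solvable_def by blast
  qed
  then obtain w where w: "w \<in> vec V" "\<forall>y\<in>V. dot_on V w (closedN V E (cvec y)) = 0"
      "dot_on V w c = 1"
    using separating_functional[of V V "\<lambda>y. closedN V E (cvec y)" c] fin closedN_in_vec
      \<open>c \<in> vec V\<close> by blast
  have "closedN V E w x = 0" for x
  proof (cases "x \<in> V")
    case True
    then have "closedN V E w x = dot_on V (closedN V E w) (cvec x)"
      using dot_on_cvec_right[OF fin] by simp
    also have "\<dots> = dot_on V w (closedN V E (cvec x))"
      by (rule dot_on_closedN_symmetric[OF G])
    finally show ?thesis
      using w(2) True by simp
  qed (simp add: closedN_def)
  then have "null_pattern V E w"
    using w(1) unfolding null_pattern_def solves_def by auto
  then show False
    using orth w(3) by simp
qed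

lemma ones_solvable:
  assumes "simple_graph V E"
  shows "solvable V E (ones V)"
proof (rule solvable_if_orthogonal_to_null_patterns[OF assms])
  show "ones V \<in> vec V"
    unfolding ones_def vec_def by simp
  fix l
  assume "null_pattern V E l"
  then have "dot_on V (closedN V E l) l = 0"
    unfolding null_pattern_def solves_def dot_on_def by simp
  then show "dot_on V l (ones V) = 0"
    using dot_on_closedN_self[OF assms] by (simp add: dot_on_ones_right)
qed

lemma cvec_solvable_if_fixed:
  assumes G: "simple_graph V E" and "fixed_vertex V E v"
  shows "solvable V E (cvec v)"
proof (rule solvable_if_orthogonal_to_null_patterns[OF G])
  have "v \<in> V" "finite V"
    using assms unfolding fixed_vertex_def simple_graph_def by blast+
  then show "cvec v \<in> vec V"
    unfolding cvec_def vec_def by auto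
  fix l
  assume "null_pattern V E l"
  then have "l v = 0"
    using assms(2) unfolding fixed_vertex_def half_activated_def by auto
  then show "dot_on V l (cvec v) = 0"
    using dot_on_cvec_right[OF \<open>finite V\<close> \<open>v \<in> V\<close>] by simp
qed

lemma solutions_of_ones_and_cvec_agree:
  assumes G: "simple_graph V E" and "v \<in> V"
    and p: "solves V E p (ones V)" and q: "solves V E q (cvec v)"
  shows "p v = q v"
proof -
  have fin: "finite V"
    using G unfolding simple_graph_def by blast
  have "p v = dot_on V (closedN V E q) p"
    using q dot_on_cvec_left[OF fin \<open>v \<in> V\<close>] unfolding solves_def by simp
  also have "\<dots> = dot_on V q (closedN V E p)"
    by (rule dot_on_closedN_symmetric[OF G])
  also have "\<dots> = dot_on V (closedN V E q) q"
    using p dot_on_closedN_self[OF G] unfolding solves_def by (simp add: dot_on_ones_right)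
  also have "\<dots> = q v"
    using q dot_on_cvec_left[OF fin \<open>v \<in> V\<close>] unfolding solves_def by simp
  finally show ?thesis .
qed

theorem proposition2p5:
  fixes V :: "'a set" and E :: "'a \<Rightarrow> 'a \<Rightarrow> bool" and v :: 'a
  assumes "simple_graph V E" and "v \<in> V"
  shows "always_activated V E v \<longleftrightarrow> c_always_activated V E (cvec v) v"
proof
  assume always: "always_activated V E v"
  then have "fixed_vertex V E v"
    unfolding always_activated_def by blast
  moreover obtain p where "solves V E p (ones V)"
    using ones_solvable[OF assms(1)] unfolding solvable_def by blast
  ultimately show "c_always_activated V E (cvec v) v"
    using always cvec_solvable_if_fixed[OF assms(1)] solutions_of_ones_and_cvec_agree[OF assms]
    unfolding always_activated_def c_always_activated_def by metis
next
  assume c_always: "c_always_activated V E (cvec v) v"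
  then obtain q where "solves V E q (cvec v)"
    unfolding c_always_activated_def solvable_def by blast
  then show "always_activated V E v"
    using c_always solutions_of_ones_and_cvec_agree[OF assms]
    unfolding always_activated_def c_always_activated_def by metis
qed

end
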